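(* There is no perfect lattice code in $\mathcal{A}(n,n-2,\ell)$ if $n\ge 4$ and $\ell\ge 2$.
   Context: For integers $n\ge 1$, $0\le t\le n$, $\ell\ge 1$, let $\mathcal{S}(n,t,\ell)=\{\mathcal{E}\in\mathbb{Z}^n: 0\le\varepsilon_i\le\ell \text{ for all } i,\ w_H(\mathcal{E})\le t\}$, where $w_H$ is the number of nonzero coordinates. A lattice here is the set of integer combinations of $n$ linearly independent vectors of $\mathbb{Z}^n$. $\mathcal{A}(n,t,\ell)$ is the set of lattices $\mathcal{L}\subseteq\mathbb{Z}^n$ such that the translates $X+\mathcal{S}(n,t,\ell)$, $X\in\mathcal{L}$, are pairwise disjoint. Such $\mathcal{L}$ is perfect if these translates also cover $\mathbb{Z}^n$. *)

theory Defs
  imports Complex_Main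
begin

text \<open>Points of Z^n are functions nat => int that vanish outside {0..<n}.\<close>

definition zvec :: "nat \<Rightarrow> (nat \<Rightarrow> int) set" where
  "zvec n = {x. \<forall>i. i \<ge> n \<longrightarrow> x i = 0}"

definition hamming_weight :: "nat \<Rightarrow> (nat \<Rightarrow> int) \<Rightarrow> nat" where
  "hamming_weight n x = card {i. i < n \<and> x i \<noteq> 0}"

definition shapeS :: "nat \<Rightarrow> nat \<Rightarrow> nat \<Rightarrow> (nat \<Rightarrow> int) set" where
  "shapeS n t l = {e \<in> zvec n. (\<forall>i<n. 0 \<le> e i \<and> e i \<le> int l) \<and> hamming_weight n e \<le> t}"

definition lin_indep_int :: "nat \<Rightarrow> (nat \<Rightarrow> nat \<Rightarrow> int) \<Rightarrow> bool" where
  "lin_indep_int n b \<longleftrightarrow> (\<forall>i<n. b i \<in> zvec n) \<and>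
     (\<forall>c :: nat \<Rightarrow> real. (\<forall>j<n. (\<Sum>i<n. c i * real_of_int (b i j)) = 0) \<longrightarrow> (\<forall>i<n. c i = 0))"

definition lattice_gen :: "nat \<Rightarrow> (nat \<Rightarrow> nat \<Rightarrow> int) \<Rightarrow> (nat \<Rightarrow> int) set" where
  "lattice_gen n b = {x. \<exists>c :: nat \<Rightarrow> int. x = (\<lambda>j. \<Sum>i<n. c i * b i j)}"

definition is_lattice :: "nat \<Rightarrow> (nat \<Rightarrow> int) set \<Rightarrow> bool" where
  "is_lattice n L \<longleftrightarrow> (\<exists>b. lin_indep_int n b \<and> L = lattice_gen n b)"

definition translate :: "(nat \<Rightarrow> int) \<Rightarrow> (nat \<Rightarrow> int) set \<Rightarrow> (nat \<Rightarrow> int) set" where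
  "translate X S = (\<lambda>e. (\<lambda>j. X j + e j)) ` S"

definition in_A :: "nat \<Rightarrow> nat \<Rightarrow> nat \<Rightarrow> (nat \<Rightarrow> int) set \<Rightarrow> bool" where
  "in_A n t l L \<longleftrightarrow> is_lattice n L \<and>
     (\<forall>X\<in>L. \<forall>Y\<in>L. X \<noteq> Y \<longrightarrow> translate X (shapeS n t l) \<inter> translate Y (shapeS n t l) = {})"

definition perfect :: "nat \<Rightarrow> nat \<Rightarrow> nat \<Rightarrow> (nat \<Rightarrow> int) set \<Rightarrow> bool" where
  "perfect n t l L \<longleftrightarrow> in_A n t l L \<and> (\<Union>X\<in>L. translate X (shapeS n t l)) = zvec n"

end

theory Submission
  imports Defs
begin

text \<open>Disjointness of the translates
means that a nonzero lattice vector can never be written as b - a with a, b in S(n, n-2, l);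
in particular its positive or its negative part leaves the shape. Covering the point
1 - e_k (all ones, 0 at k) then forces a lattice vector 1 - c_k e_k with 1 \<le> c_k \<le> l + 1.
For two indices j \<noteq> k, the difference of these vectors is c_k e_k - c_j e_j, which is
excluded when c_j, c_k \<le> l; their sum is 2 outside {j, k} and 1 - l on {j, k}, which is
excluded when c_j = c_k = l + 1 (here n \<ge> 4 and l \<ge> 2 are used). With three indices one
of the two cases must occur.\<close>

lemma is_lattice_subset_zvec: "is_lattice n L \<Longrightarrow> L \<subseteq> zvec n"
  unfolding is_lattice_def lin_indep_int_def lattice_gen_def zvec_def by auto

lemma is_lattice_zero: "is_lattice n L \<Longrightarrow> (\<lambda>_. 0) \<in> L"
  unfolding is_lattice_def lattice_gen_def by (auto intro!: exI[of _ "\<lambda>_. 0"])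

lemma is_lattice_add:
  assumes "is_lattice n L" "X \<in> L" "Y \<in> L"
  shows "(\<lambda>j. X j + Y j) \<in> L"
proof -
  obtain b where L: "L = lattice_gen n b"
    using assms(1) unfolding is_lattice_def by blast
  obtain c d where "X = (\<lambda>j. \<Sum>i<n. c i * b i j)" "Y = (\<lambda>j. \<Sum>i<n. d i * b i j)"
    using assms(2,3) unfolding L lattice_gen_def by blast
  then have "(\<lambda>j. X j + Y j) = (\<lambda>j. \<Sum>i<n. (c i + d i) * b i j)"
    by (simp add: distrib_right sum.distrib)
  then show ?thesis unfolding L lattice_gen_def by (intro CollectI exI)
qed

lemma is_lattice_diff:
  assumes "is_lattice n L" "X \<in> L" "Y \<in> L"
  shows "(\<lambda>j. X j - Y j) \<in> L"
proof -
  obtain b where L: "L = lattice_gen n b"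
    using assms(1) unfolding is_lattice_def by blast
  obtain c d where "X = (\<lambda>j. \<Sum>i<n. c i * b i j)" "Y = (\<lambda>j. \<Sum>i<n. d i * b i j)"
    using assms(2,3) unfolding L lattice_gen_def by blast
  then have "(\<lambda>j. X j - Y j) = (\<lambda>j. \<Sum>i<n. (c i - d i) * b i j)"
    by (simp add: left_diff_distrib sum_subtractf)
  then show ?thesis unfolding L lattice_gen_def by (intro CollectI exI)
qed

lemma in_A_translates_meet_eq:
  assumes "in_A n t l L" "X \<in> L" "Y \<in> L" "a \<in> shapeS n t l" "b \<in> shapeS n t l"
    and "\<And>j. X j + a j = Y j + b j"
  shows "X = Y"
proof (rule ccontr)
  assume "X \<noteq> Y"
  with assms(1-3) have "translate X (shapeS n t l) \<inter> translate Y (shapeS n t l) = {}"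
    unfolding in_A_def by blast
  moreover have "(\<lambda>j. X j + a j) \<in> translate X (shapeS n t l)"
    using assms(4) unfolding translate_def by blast
  moreover have "(\<lambda>j. X j + a j) \<in> translate Y (shapeS n t l)"
    using assms(5,6) unfolding translate_def by (auto intro!: image_eqI[of _ _ b])
  ultimately show False by blast
qed

lemma in_A_lattice_vector_eq_zero:
  assumes "in_A n t l L" "X \<in> L"
    and "\<forall>i<n. \<bar>X i\<bar> \<le> int l"
    and "card {i. i < n \<and> X i > 0} \<le> t" "card {i. i < n \<and> X i < 0} \<le> t"
  shows "X = (\<lambda>_. 0)"
proof -
  have lat: "is_lattice n L" using assms(1) unfolding in_A_def by blast
  then have "X \<in> zvec n" using assms(2) is_lattice_subset_zvec by blast
  define pos where "pos = (\<lambda>j. max (X j) 0)"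
  define neg where "neg = (\<lambda>j. max (- X j) 0)"
  have "{i. i < n \<and> pos i \<noteq> 0} = {i. i < n \<and> X i > 0}"
    "{i. i < n \<and> neg i \<noteq> 0} = {i. i < n \<and> X i < 0}"
    by (auto simp: pos_def neg_def)
  then have pos: "pos \<in> shapeS n t l" and neg: "neg \<in> shapeS n t l"
    using \<open>X \<in> zvec n\<close> assms(3-5)
    by (auto simp: shapeS_def zvec_def hamming_weight_def pos_def neg_def)
  show ?thesis
    by (rule in_A_translates_meet_eq[OF assms(1,2) is_lattice_zero[OF lat] neg pos])
      (simp add: pos_def neg_def max_def)
qed

lemma card_avoiding_two_le:
  assumes "S \<subseteq> {..<n}" "j \<notin> S" "k \<notin> S" "j < n" "k < n" "j \<noteq> k"
  shows "card S \<le> n - 2"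
proof -
  have "card S \<le> card ({..<n} - {j, k})"
    using assms by (intro card_mono) auto
  also have "\<dots> = n - 2"
    using assms by (subst card_Diff_subset) auto
  finally show ?thesis .
qed

definition ones_minus_unit :: "nat \<Rightarrow> nat \<Rightarrow> int \<Rightarrow> nat \<Rightarrow> int" where
  "ones_minus_unit n k c = (\<lambda>j. (if j < n then 1 else 0) - (if j = k then c else 0))"

lemma perfect_ones_minus_unit_in_lattice:
  assumes perf: "perfect n (n - 2) l L" and "n \<ge> 2" "l \<ge> 1" "k < n"
  shows "\<exists>c. 1 \<le> c \<and> c \<le> int l + 1 \<and> ones_minus_unit n k c \<in> L"
proof -
  have inA: "in_A n (n - 2) l L" using perf unfolding perfect_def by blast
  define q where "q = ones_minus_unit n k 1"
  have "q \<in> zvec n" unfolding q_def ones_minus_unit_def zvec_def using \<open>k < n\<close> by auto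
  with perf obtain X where X: "X \<in> L" and "q \<in> translate X (shapeS n (n - 2) l)"
    unfolding perfect_def by blast
  then obtain s where s: "s \<in> shapeS n (n - 2) l" and q: "q = (\<lambda>j. X j + s j)"
    unfolding translate_def by blast
  have X_q_s: "X j = q j - s j" for j by (simp add: q)
  have s_bounds: "\<And>j. j < n \<Longrightarrow> 0 \<le> s j \<and> s j \<le> int l"
    and s_weight: "card {i. i < n \<and> s i \<noteq> 0} \<le> n - 2"
    and s_zvec: "\<And>j. j \<ge> n \<Longrightarrow> s j = 0"
    using s by (auto simp: shapeS_def zvec_def hamming_weight_def)
  have s_off_k: "s i = 0" if "i < n" "i \<noteq> k" for i
  proof (rule ccontr)
    assume "s i \<noteq> 0"
    have "X = (\<lambda>_. 0)"
    proof (rule in_A_lattice_vector_eq_zero[OF inA X])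
      show "\<forall>j<n. \<bar>X j\<bar> \<le> int l"
      proof (intro allI impI)
        fix j assume "j < n"
        then show "\<bar>X j\<bar> \<le> int l"
          using s_bounds[of j] \<open>l \<ge> 1\<close> by (auto simp: X_q_s q_def ones_minus_unit_def)
      qed
      show "card {j. j < n \<and> X j > 0} \<le> n - 2"
        using s_bounds[of i] s_bounds[of k] \<open>s i \<noteq> 0\<close> that \<open>k < n\<close>
        by (intro card_avoiding_two_le[of _ n i k])
          (auto simp: X_q_s q_def ones_minus_unit_def)
      have neg_supp: "{j. j < n \<and> X j < 0} \<subseteq> {j. j < n \<and> s j \<noteq> 0}"
        by (auto simp: X_q_s q_def ones_minus_unit_def split: if_splits)
      show "card {j. j < n \<and> X j < 0} \<le> n - 2"
        by (rule le_trans[OF card_mono[OF _ neg_supp] s_weight]) simp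
    qed
    then have "s j = q j" for j using X_q_s[of j] by simp
    then have "{j. j < n \<and> s j \<noteq> 0} = {..<n} - {k}"
      by (auto simp: q_def ones_minus_unit_def)
    then show False using s_weight \<open>k < n\<close> \<open>n \<ge> 2\<close> by simp
  qed
  have "X = ones_minus_unit n k (1 + s k)"
  proof
    fix j show "X j = ones_minus_unit n k (1 + s k) j"
      using s_off_k[of j] s_zvec[of j] by (cases "j < n") (auto simp: X_q_s q_def ones_minus_unit_def)
  qed
  then show ?thesis using X s_bounds[OF \<open>k < n\<close>] by (intro exI[of _ "1 + s k"]) auto
qed

lemma in_A_ones_minus_unit_not_both_le:
  assumes inA: "in_A n (n - 2) l L" and "n \<ge> 3" "j < n" "k < n" "j \<noteq> k"
    and "ones_minus_unit n j c \<in> L" "ones_minus_unit n k d \<in> L"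
    and "1 \<le> c" "c \<le> int l" "1 \<le> d" "d \<le> int l"
  shows False
proof -
  define D where "D i = ones_minus_unit n j c i - ones_minus_unit n k d i" for i
  have D_eq: "D i = (if i = k then d else 0) - (if i = j then c else 0)" for i
    using assms(3-5) by (simp add: D_def ones_minus_unit_def)
  have "D \<in> L"
    using inA assms(6,7) is_lattice_diff unfolding in_A_def D_def by blast
  have pos: "{i. i < n \<and> D i > 0} \<subseteq> {k}" and neg: "{i. i < n \<and> D i < 0} \<subseteq> {j}"
    using assms(5,8,10) by (auto simp: D_eq split: if_splits)
  have "D = (\<lambda>_. 0)"
  proof (rule in_A_lattice_vector_eq_zero[OF inA \<open>D \<in> L\<close>])
    show "\<forall>i<n. \<bar>D i\<bar> \<le> int l"
      using assms(5,8-11) by (simp add: D_eq)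
    show "card {i. i < n \<and> D i > 0} \<le> n - 2" "card {i. i < n \<and> D i < 0} \<le> n - 2"
      using card_mono[OF _ pos] card_mono[OF _ neg] \<open>n \<ge> 3\<close> by simp_all
  qed
  then have "D j = 0" by simp
  then show False using assms(5,8) by (simp add: D_eq)
qed

lemma in_A_ones_minus_unit_not_both_max:
  assumes inA: "in_A n (n - 2) l L" and "n \<ge> 4" "l \<ge> 2" "j < n" "k < n" "j \<noteq> k"
    and "ones_minus_unit n j (int l + 1) \<in> L" "ones_minus_unit n k (int l + 1) \<in> L"
  shows False
proof -
  define S where "S i = ones_minus_unit n j (int l + 1) i + ones_minus_unit n k (int l + 1) i"
    for i
  have S_eq: "S i = (if i < n then (if i = j \<or> i = k then 1 - int l else 2) else 0)" for i
    using assms(4-6) by (simp add: S_def ones_minus_unit_def)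
  have "S \<in> L"
    using inA assms(7,8) is_lattice_add unfolding in_A_def S_def by blast
  have neg: "{i. i < n \<and> S i < 0} \<subseteq> {j, k}"
    by (auto simp: S_eq split: if_splits)
  have "S = (\<lambda>_. 0)"
  proof (rule in_A_lattice_vector_eq_zero[OF inA \<open>S \<in> L\<close>])
    show "\<forall>i<n. \<bar>S i\<bar> \<le> int l"
      using \<open>l \<ge> 2\<close> by (simp add: S_eq)
    show "card {i. i < n \<and> S i > 0} \<le> n - 2"
      using \<open>l \<ge> 2\<close> assms(4-6)
      by (intro card_avoiding_two_le[of _ n j k]) (auto simp: S_eq)
    have "card {j, k} \<le> n - 2"
      using \<open>n \<ge> 4\<close> \<open>j \<noteq> k\<close> by simp
    then show "card {i. i < n \<and> S i < 0} \<le> n - 2"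
      using card_mono[OF _ neg] by simp
  qed
  then have "S j = 0" by simp
  then show False using assms(3,4) by (simp add: S_eq)
qed

lemma in_A_ones_minus_unit_le_iff:
  assumes inA: "in_A n (n - 2) l L" and "n \<ge> 4" "l \<ge> 2" and jk: "j < n" "k < n" "j \<noteq> k"
    and L: "ones_minus_unit n j c \<in> L" "ones_minus_unit n k d \<in> L"
    and c: "1 \<le> c" "c \<le> int l + 1" and d: "1 \<le> d" "d \<le> int l + 1"
  shows "c \<le> int l \<longleftrightarrow> \<not> d \<le> int l"
proof
  assume "c \<le> int l"
  then show "\<not> d \<le> int l"
    using in_A_ones_minus_unit_not_both_le[OF inA _ jk L] \<open>n \<ge> 4\<close> c(1) d(1) by auto
next
  assume "\<not> d \<le> int l"
  show "c \<le> int l"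
  proof (rule ccontr)
    assume "\<not> c \<le> int l"
    then have "c = int l + 1" "d = int l + 1" using c(2) d(2) \<open>\<not> d \<le> int l\<close> by simp_all
    then show False using in_A_ones_minus_unit_not_both_max[OF inA assms(2,3) jk] L by simp
  qed
qed

theorem mainTheorem7:
  fixes n l :: nat
  assumes "n \<ge> 4" and "l \<ge> 2"
  shows "\<not> (\<exists>L. perfect n (n - 2) l L)"
proof
  assume "\<exists>L. perfect n (n - 2) l L"
  then obtain L where perf: "perfect n (n - 2) l L" by blast
  then have inA: "in_A n (n - 2) l L" unfolding perfect_def by blast
  have "\<forall>k\<in>{..<n}. \<exists>c. 1 \<le> c \<and> c \<le> int l + 1 \<and> ones_minus_unit n k c \<in> L"
    using perfect_ones_minus_unit_in_lattice[OF perf] assms by simp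
  from bchoice[OF this] obtain c where
    c: "\<forall>k\<in>{..<n}. 1 \<le> c k \<and> c k \<le> int l + 1 \<and> ones_minus_unit n k (c k) \<in> L"
    by blast
  have opposite: "c j \<le> int l \<longleftrightarrow> \<not> c k \<le> int l" if "j < n" "k < n" "j \<noteq> k" for j k
    using in_A_ones_minus_unit_le_iff[OF inA assms that] c that by simp
  from \<open>n \<ge> 4\<close> have "c 0 \<le> int l \<longleftrightarrow> \<not> c 1 \<le> int l" "c 1 \<le> int l \<longleftrightarrow> \<not> c 2 \<le> int l"
    "c 0 \<le> int l \<longleftrightarrow> \<not> c 2 \<le> int l"
    by (simp_all add: opposite)
  then show False by blast
qed

end
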